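(* Let $n,m,T\in\mathbb{N}$ and $u_{[0,T]}\in\mathbb{R}^{m(T+1)}$. Then the following are equivalent: (i) for every controllable pair $(A,B)\in\mathbb{R}^{n\times n}\times\mathbb{R}^{n\times m}$ and every state sequence $x_{[0,T]}$ satisfying $x(t+1)=Ax(t)+Bu(t)$ for all $t\in[0,T-1]$, the matrix $\mathcal{H}_1(x_{[0,T]})=\begin{bmatrix}x(0)&\cdots&x(T)\end{bmatrix}$ has full row rank $n$; (ii) $u_{[0,T-1]}$ is persistently exciting of order $n$.
   Context: For $v:\mathbb{Z}_+\to\mathbb{R}^q$, $v_{[0,T-1]}=\begin{bmatrix}v(0)^\top & \cdots & v(T-1)^\top\end{bmatrix}^\top$. For $k\in[1,T]$ the Hankel matrix of depth $k$ is the $qk\times(T-k+1)$ block matrix $\mathcal{H}_k(v_{[0,T-1]})$ whose $(i,j)$ block ($i\in[0,k-1]$, $j\in[0,T-k]$) is $v(i+j)$. The sequence $v_{[0,T-1]}$ is persistently exciting of order $k$ if $k\le T$ and $\mathcal{H}_k(v_{[0,T-1]})$ has full row rank (if $k>T$ it is not persistently exciting of order $k$). *)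

theory Defs
  imports "Jordan_Normal_Form.DL_Rank"
begin

text \<open>Block Hankel matrix of depth k of the finite sequence v(0),...,v(len-1),
  where each v(i) is a vector in R^q: a (q*k) x (len-k+1) matrix whose (i,j) block
  (i in [0,k-1], j in [0,len-k]) is v(i+j).\<close>
definition hankel :: "nat \<Rightarrow> nat \<Rightarrow> nat \<Rightarrow> (nat \<Rightarrow> real vec) \<Rightarrow> real mat" where
  "hankel q k len v = mat (q * k) (len + 1 - k) (\<lambda>(i, j). v (i div q + j) $ (i mod q))"

definition full_row_rank :: "real mat \<Rightarrow> bool" where
  "full_row_rank M \<longleftrightarrow> vec_space.rank (dim_row M) M = dim_row M"

definition persistently_exciting :: "nat \<Rightarrow> nat \<Rightarrow> (nat \<Rightarrow> real vec) \<Rightarrow> nat \<Rightarrow> bool" where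
  "persistently_exciting q len v k \<longleftrightarrow> k \<le> len \<and> full_row_rank (hankel q k len v)"

definition ctrb_mat :: "nat \<Rightarrow> nat \<Rightarrow> real mat \<Rightarrow> real mat \<Rightarrow> real mat" where
  "ctrb_mat n m A B = mat n (n * m) (\<lambda>(i, j). ((A ^\<^sub>m (j div m)) * B) $$ (i, j mod m))"

definition controllable :: "nat \<Rightarrow> nat \<Rightarrow> real mat \<Rightarrow> real mat \<Rightarrow> bool" where
  "controllable n m A B \<longleftrightarrow> vec_space.rank n (ctrb_mat n m A B) = n"

end

theory Submission
  imports Defs "Jordan_Normal_Form.Jordan_Normal_Form"
begin

text \<open>
  Both conditions are statements about left kernels. Suppose \<open>\<xi>\<close> annihilates every state
  \<open>x(0), \<dots>, x(T)\<close>. The \<open>n + 1\<close> row vectors \<open>\<xi>\<^sup>T A\<^sup>k\<close>, \<open>k \<le> n\<close>, are dependent, which gives a monic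
  \<open>a\<close> of degree \<open>d \<le> n\<close> with \<open>\<xi>\<^sup>T a(A) = 0\<close>. Combining \<open>\<xi>\<^sup>T x(j + k)\<close> with the coefficients of
  \<open>a\<close> cancels the state part and leaves a relation \<open>\<Sum>\<^sub>i w\<^sub>i\<^sup>T u(j + i) = 0\<close> for \<open>j \<le> T - n\<close>, whose
  coefficients \<open>w\<^sub>i\<close> are built from the Markov parameters \<open>\<xi>\<^sup>T A\<^sup>l B\<close>. Persistency of excitation
  forces \<open>w = 0\<close>, the recurrence given by \<open>a\<close> then forces \<open>\<xi>\<^sup>T A\<^sup>l B = 0\<close> for all \<open>l\<close>, and
  controllability gives \<open>\<xi> = 0\<close>.

  Conversely, let \<open>(w\<^sub>i)\<close> be a nonzero left-kernel vector of the input Hankel matrix. Expanding the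
  shift \<open>\<sigma>\<close> as \<open>(\<sigma> - c) + c\<close> rewrites the relation in powers of \<open>\<sigma> - c\<close>; for \<open>c\<close> with
  \<open>\<Sum>\<^sub>i c\<^sup>i w\<^sub>i \<noteq> 0\<close> the coefficients form an input matrix \<open>B\<close> that makes the pair
  (Jordan block with eigenvalue \<open>c\<close>, \<open>B\<close>) controllable. For this system the first state
  coordinate satisfies the same difference relation, so with a suitable initial state it vanishes on
  \<open>[0, T]\<close>, and the first unit vector annihilates the state data.
\<close>

section \<open>Full row rank through left kernels\<close>

lemma (in vec_space) rank_eq_dim_iff_span_cols:
  assumes M: "M \<in> carrier_mat n c"
  shows "rank M = n \<longleftrightarrow> span (set (cols M)) = carrier_vec n"
proof
  assume r: "rank M = n"
  obtain S where S: "maximal S (\<lambda>T. T \<subseteq> set (cols M) \<and> lin_indpt T)"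
    using maximal_exists[of "\<lambda>T. T \<subseteq> set (cols M) \<and> lin_indpt T" "card (set (cols M))" "{}"]
    by (meson List.finite_set card_mono empty_iff empty_subsetI finite_lin_indpt2 rev_finite_subset)
  have S_sub: "S \<subseteq> set (cols M)" and S_indpt: "lin_indpt S"
    using S unfolding maximal_def by auto
  have cols: "set (cols M) \<subseteq> carrier_vec n" using M cols_dim by blast
  have "card S = n" using rank_card_indpt[OF M S] r by simp
  have "finite S" using S_sub finite_subset by blast
  have "basis S"
    by (rule dim_li_is_basis) (use \<open>finite S\<close> \<open>card S = n\<close> S_sub S_indpt cols dim_is_n in auto)
  then have "span S = carrier_vec n" unfolding basis_def by auto
  moreover have "span S \<subseteq> span (set (cols M))" using span_is_monotone S_sub by auto
  moreover have "span (set (cols M)) \<subseteq> carrier_vec n" using span_is_subset2 cols by auto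
  ultimately show "span (set (cols M)) = carrier_vec n" by auto
next
  assume "span (set (cols M)) = carrier_vec n"
  then have "span_vs (set (cols M)) = V" by simp
  then show "rank M = n" unfolding rank_def using dim_is_n by simp
qed

lemma real_scalar_prod_self_eq_0:
  fixes v :: "real vec"
  assumes "v \<in> carrier_vec n"
  shows "v \<bullet> v = 0 \<longleftrightarrow> v = 0\<^sub>v n"
  using conjugate_square_eq_0_vec[OF assms] by simp

lemma det_gram_mat_nonzero:
  fixes M :: "real mat"
  assumes M: "M \<in> carrier_mat n c"
    and ker: "\<forall>v\<in>carrier_vec n. transpose_mat M *\<^sub>v v = 0\<^sub>v c \<longrightarrow> v = 0\<^sub>v n"
  shows "det (M * transpose_mat M) \<noteq> 0"
proof
  assume "det (M * transpose_mat M) = 0"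
  then obtain v where v: "v \<in> carrier_vec n" "v \<noteq> 0\<^sub>v n" "(M * transpose_mat M) *\<^sub>v v = 0\<^sub>v n"
    using det_0_iff_vec_prod_zero_field[of "M * transpose_mat M" n] M by auto
  define w where "w = transpose_mat M *\<^sub>v v"
  have w: "w \<in> carrier_vec c" using M v(1) unfolding w_def by auto
  have "w \<bullet> w = v \<bullet> ((M * transpose_mat M) *\<^sub>v v)"
    using transpose_vec_mult_scalar[OF M w v(1)] M v(1) unfolding w_def by simp
  then have "w = 0\<^sub>v c" using v(1,3) w real_scalar_prod_self_eq_0 by simp
  then show False using ker v(1,2) unfolding w_def by auto
qed

text \<open>The nontrivial direction goes through the Gram matrix \<open>M * M\<^sup>T\<close>, which is invertible over the reals.\<close>

lemma full_rank_iff_transpose_kernel_trivial: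
  fixes M :: "real mat"
  assumes M: "M \<in> carrier_mat n c"
  shows "vec_space.rank n M = n \<longleftrightarrow>
    (\<forall>v\<in>carrier_vec n. transpose_mat M *\<^sub>v v = 0\<^sub>v c \<longrightarrow> v = 0\<^sub>v n)"
proof -
  interpret vec_space "TYPE(real)" n .
  have range: "span (set (cols A)) = {y\<in>carrier_vec n. \<exists>x\<in>carrier_vec nc. A *\<^sub>v x = y}"
    if "A \<in> carrier_mat n nc" for A nc
    using col_space_eq that unfolding col_space_def by auto
  show ?thesis
  proof
    assume "rank M = n"
    then have span: "span (set (cols M)) = carrier_vec n"
      using rank_eq_dim_iff_span_cols[OF M] by simp
    show "\<forall>v\<in>carrier_vec n. transpose_mat M *\<^sub>v v = 0\<^sub>v c \<longrightarrow> v = 0\<^sub>v n"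
    proof (intro ballI impI)
      fix v :: "real vec"
      assume v: "v \<in> carrier_vec n" and ker: "transpose_mat M *\<^sub>v v = 0\<^sub>v c"
      obtain x where x: "x \<in> carrier_vec c" "M *\<^sub>v x = v"
        using v span range[OF M] by auto
      have "v \<bullet> v = (transpose_mat M *\<^sub>v v) \<bullet> x"
        using transpose_vec_mult_scalar[OF M x(1) v] x(2) by simp
      then show "v = 0\<^sub>v n" using ker x v real_scalar_prod_self_eq_0 by simp
    qed
  next
    assume "\<forall>v\<in>carrier_vec n. transpose_mat M *\<^sub>v v = 0\<^sub>v c \<longrightarrow> v = 0\<^sub>v n"
    then have "det (M * transpose_mat M) \<noteq> 0" by (rule det_gram_mat_nonzero[OF M])
    moreover have G: "M * transpose_mat M \<in> carrier_mat n n" using M by auto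
    ultimately have span_G: "span (set (cols (M * transpose_mat M))) = carrier_vec n"
      using det_rank_iff[OF G] rank_eq_dim_iff_span_cols[OF G] by simp
    have "carrier_vec n \<subseteq> span (set (cols M))"
    proof
      fix y :: "real vec" assume y: "y \<in> carrier_vec n"
      then obtain z where z: "z \<in> carrier_vec n" "(M * transpose_mat M) *\<^sub>v z = y"
        using span_G range[OF G] by auto
      then have "M *\<^sub>v (transpose_mat M *\<^sub>v z) = y" using M by auto
      then show "y \<in> span (set (cols M))" using range[OF M] y z M by fastforce
    qed
    then show "rank M = n"
      using rank_eq_dim_iff_span_cols[OF M] range[OF M] by auto
  qed
qed

lemma full_row_rank_mat_iff:
  "full_row_rank (mat r c f) \<longleftrightarrow>
    (\<forall>v\<in>carrier_vec r. (\<forall>j<c. (\<Sum>i<r. v $ i * f (i, j)) = 0) \<longrightarrow> v = 0\<^sub>v r)"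
proof -
  have "(transpose_mat (mat r c f) *\<^sub>v v) $ j = (\<Sum>i<r. v $ i * f (i, j))"
    if "v \<in> carrier_vec r" "j < c" for v j
    using that unfolding mult_mat_vec_def scalar_prod_def
    by (auto simp: lessThan_atLeast0 intro!: sum.cong)
  then have "transpose_mat (mat r c f) *\<^sub>v v = 0\<^sub>v c \<longleftrightarrow> (\<forall>j<c. (\<Sum>i<r. v $ i * f (i, j)) = 0)"
    if "v \<in> carrier_vec r" for v
    using that by (auto simp: vec_eq_iff)
  then show ?thesis
    unfolding full_row_rank_def
    using full_rank_iff_transpose_kernel_trivial[of "mat r c f" r c] by auto
qed

lemma sum_div_mod_blocks:
  fixes m n :: nat
  shows "(\<Sum>i<m * n. f (i div m) (i mod m)) = (\<Sum>i<n. \<Sum>p<m. f i p)"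
proof -
  have "(\<Sum>i\<in>{k * m..<k * m + m}. f (i div m) (i mod m)) = (\<Sum>p<m. f k p)" for k
    using sum.shift_bounds_nat_ivl[of "\<lambda>i. f (i div m) (i mod m)" 0 "k * m" m]
    by (simp add: lessThan_atLeast0 add.commute)
  then show ?thesis
    using sum.nat_group[of "\<lambda>i. f (i div m) (i mod m)" m n] by (simp add: mult.commute)
qed

lemma all_less_mult_div_mod:
  fixes m n :: nat
  shows "(\<forall>j<n * m. P (j div m) (j mod m)) \<longleftrightarrow> (\<forall>k<n. \<forall>p<m. P k p)"
proof safe
  fix k p assume all: "\<forall>j<n * m. P (j div m) (j mod m)" and "k < n" "p < m"
  then have "k * m + p < n * m"
    by (metis add_less_cancel_left less_le_trans mult_Suc mult_le_mono1 Suc_leI add.commute)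
  moreover have "(k * m + p) div m = k" "(k * m + p) mod m = p" using \<open>p < m\<close> by auto
  ultimately show "P k p" using all by metis
next
  fix j assume "\<forall>k<n. \<forall>p<m. P k p" "j < n * m"
  moreover have "j div m < n" using \<open>j < n * m\<close> by (simp add: less_mult_imp_div_less)
  moreover have "j mod m < m" using \<open>j < n * m\<close> by (cases "m = 0") auto
  ultimately show "P (j div m) (j mod m)" by blast
qed

lemma full_row_rank_state_data_iff:
  assumes "\<forall>t\<le>T. x t \<in> carrier_vec n"
  shows "full_row_rank (hankel n 1 (T + 1) x) \<longleftrightarrow>
    (\<forall>\<xi>\<in>carrier_vec n. (\<forall>t\<le>T. \<xi> \<bullet> x t = 0) \<longrightarrow> \<xi> = 0\<^sub>v n)"
proof -
  have data: "hankel n 1 (T + 1) x = mat n (Suc T) (\<lambda>(i, t). x t $ i)"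
    unfolding hankel_def by (intro eq_matI) auto
  have "(\<Sum>i<n. \<xi> $ i * x t $ i) = \<xi> \<bullet> x t" if "t \<le> T" for \<xi> t
    using assms that unfolding scalar_prod_def by (auto simp: lessThan_atLeast0)
  then show ?thesis
    unfolding data full_row_rank_mat_iff by (simp add: less_Suc_eq_le)
qed

lemma full_row_rank_blocks_iff:
  fixes m n :: nat
  shows "full_row_rank (mat (m * n) c (\<lambda>(i, j). f (i div m) (i mod m) j)) \<longleftrightarrow>
    (\<forall>w. (\<forall>j<c. (\<Sum>i<n. \<Sum>p<m. w i p * f i p j) = 0) \<longrightarrow> (\<forall>i<n. \<forall>p<m. w i p = 0))"
proof -
  have sum_vec: "(\<Sum>i<m * n. vec (m * n) (\<lambda>i. w (i div m) (i mod m)) $ i * f (i div m) (i mod m) j)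
      = (\<Sum>i<n. \<Sum>p<m. w i p * f i p j)" for w j
    using sum_div_mod_blocks[of "\<lambda>i p. w i p * f i p j" m n] by simp
  have vec_eq_0: "vec (m * n) (\<lambda>i. w (i div m) (i mod m)) = 0\<^sub>v (m * n) \<longleftrightarrow> (\<forall>i<n. \<forall>p<m. w i p = 0)"
    for w
    using all_less_mult_div_mod[where P = "\<lambda>i p. w i p = 0" and m = m and n = n]
    by (auto simp: vec_eq_iff mult.commute)
  have vec_w: "v = vec (m * n) (\<lambda>i. v $ (i div m * m + i mod m))"
    if "v \<in> carrier_vec (m * n)" for v :: "real vec"
    using that by auto
  have rank_iff: "full_row_rank (mat (m * n) c (\<lambda>(i, j). f (i div m) (i mod m) j)) \<longleftrightarrow>
      (\<forall>v\<in>carrier_vec (m * n).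
        (\<forall>j<c. (\<Sum>i<m * n. v $ i * f (i div m) (i mod m) j) = 0) \<longrightarrow> v = 0\<^sub>v (m * n))"
    unfolding full_row_rank_mat_iff by simp
  show ?thesis
    unfolding rank_iff
  proof
    assume kernel: "\<forall>v\<in>carrier_vec (m * n).
        (\<forall>j<c. (\<Sum>i<m * n. v $ i * f (i div m) (i mod m) j) = 0) \<longrightarrow> v = 0\<^sub>v (m * n)"
    show "\<forall>w. (\<forall>j<c. (\<Sum>i<n. \<Sum>p<m. w i p * f i p j) = 0) \<longrightarrow> (\<forall>i<n. \<forall>p<m. w i p = 0)"
    proof (rule allI, rule impI)
      fix w :: "nat \<Rightarrow> nat \<Rightarrow> real"
      assume "\<forall>j<c. (\<Sum>i<n. \<Sum>p<m. w i p * f i p j) = 0"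
      then have "vec (m * n) (\<lambda>i. w (i div m) (i mod m)) = 0\<^sub>v (m * n)"
        using kernel sum_vec by simp
      then show "\<forall>i<n. \<forall>p<m. w i p = 0" using vec_eq_0 by blast
    qed
  next
    assume kernel: "\<forall>w. (\<forall>j<c. (\<Sum>i<n. \<Sum>p<m. w i p * f i p j) = 0) \<longrightarrow> (\<forall>i<n. \<forall>p<m. w i p = 0)"
    show "\<forall>v\<in>carrier_vec (m * n).
        (\<forall>j<c. (\<Sum>i<m * n. v $ i * f (i div m) (i mod m) j) = 0) \<longrightarrow> v = 0\<^sub>v (m * n)"
    proof (rule ballI, rule impI)
      fix v :: "real vec"
      assume v: "v \<in> carrier_vec (m * n)"
        and rel: "\<forall>j<c. (\<Sum>i<m * n. v $ i * f (i div m) (i mod m) j) = 0"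
      have "(\<Sum>i<m * n. v $ i * f (i div m) (i mod m) j)
          = (\<Sum>i<n. \<Sum>p<m. v $ (i * m + p) * f i p j)" for j
        using sum_div_mod_blocks[of "\<lambda>i p. v $ (i * m + p) * f i p j" m n] by simp
      then have "\<forall>j<c. (\<Sum>i<n. \<Sum>p<m. v $ (i * m + p) * f i p j) = 0"
        using rel by simp
      then have "\<forall>i<n. \<forall>p<m. v $ (i * m + p) = 0"
        by (rule kernel[THEN spec, THEN mp])
      then have "vec (m * n) (\<lambda>i. v $ (i div m * m + i mod m)) = 0\<^sub>v (m * n)"
        by (rule iffD2[OF vec_eq_0[of "\<lambda>i p. v $ (i * m + p)"]])
      with vec_w[OF v] show "v = 0\<^sub>v (m * n)" by (rule trans)
    qed
  qed
qed

lemma persistently_exciting_iff: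
  "persistently_exciting m T u n \<longleftrightarrow> n \<le> T \<and>
    (\<forall>w. (\<forall>j\<le>T - n. (\<Sum>i<n. \<Sum>p<m. w i p * u (j + i) $ p) = 0) \<longrightarrow> (\<forall>i<n. \<forall>p<m. w i p = 0))"
proof (cases "n \<le> T")
  case True
  then have "(j < T + 1 - n) = (j \<le> T - n)" for j by auto
  then show ?thesis
    unfolding persistently_exciting_def hankel_def
    using full_row_rank_blocks_iff[of m n "T + 1 - n" "\<lambda>i p j. u (i + j) $ p"] True
    by (simp add: add.commute)
qed (simp add: persistently_exciting_def)

lemma persistently_exciting_cong:
  assumes "\<forall>t<T. u t = u' t"
  shows "persistently_exciting m T u n \<longleftrightarrow> persistently_exciting m T u' n"
proof (cases "n \<le> T")
  case True
  have "(\<Sum>i<n. \<Sum>p<m. w i p * u (j + i) $ p) = (\<Sum>i<n. \<Sum>p<m. w i p * u' (j + i) $ p)"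
    if "j \<le> T - n" for w j
  proof (intro sum.cong refl)
    fix i p assume "i \<in> {..<n}"
    then have "j + i < T" using that True by auto
    then show "w i p * u (j + i) $ p = w i p * u' (j + i) $ p" using assms by simp
  qed
  then show ?thesis unfolding persistently_exciting_iff by simp
qed (simp add: persistently_exciting_iff)

lemma controllable_iff:
  assumes A: "A \<in> carrier_mat n n" and B: "B \<in> carrier_mat n m"
  shows "controllable n m A B \<longleftrightarrow>
    (\<forall>\<xi>\<in>carrier_vec n. (\<forall>k<n. transpose_mat (A ^\<^sub>m k * B) *\<^sub>v \<xi> = 0\<^sub>v m) \<longrightarrow> \<xi> = 0\<^sub>v n)"
proof -
  have "transpose_mat (A ^\<^sub>m k * B) *\<^sub>v \<xi> = 0\<^sub>v m \<longleftrightarrow> (\<forall>p<m. (\<Sum>i<n. \<xi> $ i * (A ^\<^sub>m k * B) $$ (i, p)) = 0)"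
    if "\<xi> \<in> carrier_vec n" for \<xi> k
    using that A B by (auto simp: vec_eq_iff scalar_prod_def lessThan_atLeast0 mult.commute)
  moreover have "controllable n m A B \<longleftrightarrow> full_row_rank (ctrb_mat n m A B)"
    unfolding controllable_def full_row_rank_def ctrb_mat_def by simp
  ultimately show ?thesis
    unfolding ctrb_mat_def full_row_rank_mat_iff
    using all_less_mult_div_mod[where P = "\<lambda>k p. (\<Sum>i<n. _ $ i * (A ^\<^sub>m k * B) $$ (i, p)) = 0"]
    by simp
qed

section \<open>Persistency of excitation implies full rank of the state data\<close>

lemma pow_mat_add:
  assumes "A \<in> carrier_mat n n"
  shows "A ^\<^sub>m (k + s) = A ^\<^sub>m k * A ^\<^sub>m s"
  using assms by (induction s) (auto simp: assoc_mult_mat[of _ n n _ n _ n])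

lemma sum_triangle_swap:
  "(\<Sum>k\<le>d. \<Sum>i<k. f k i) = (\<Sum>i<d. \<Sum>k\<in>{Suc i..d}. f k i)"
proof (induction d)
  case (Suc d)
  have "(\<Sum>i<Suc d. \<Sum>k\<in>{Suc i..Suc d}. f k i) = (\<Sum>i<Suc d. (\<Sum>k\<in>{Suc i..d}. f k i) + f (Suc d) i)"
    by (intro sum.cong) auto
  then show ?case using Suc by (simp add: sum.distrib)
qed simp

lemma trajectory_expansion:
  assumes A: "A \<in> carrier_mat n n" and B: "B \<in> carrier_mat n m" and \<xi>: "\<xi> \<in> carrier_vec n"
    and x: "\<forall>t\<le>T. x t \<in> carrier_vec n" and u: "\<forall>t\<le>T. u t \<in> carrier_vec m"
    and dyn: "\<forall>t<T. x (Suc t) = A *\<^sub>v x t + B *\<^sub>v u t"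
    and "j + k \<le> T"
  shows "\<xi> \<bullet> x (j + k) = \<xi> \<bullet> (A ^\<^sub>m k *\<^sub>v x j) + (\<Sum>i<k. \<xi> \<bullet> ((A ^\<^sub>m (k - Suc i) * B) *\<^sub>v u (j + i)))"
  using \<open>j + k \<le> T\<close>
proof (induction k arbitrary: j)
  case 0
  then show ?case using A x by simp
next
  case (Suc k)
  have xj: "x j \<in> carrier_vec n" and uj: "u j \<in> carrier_vec m" using Suc.prems x u by auto
  have "A ^\<^sub>m k *\<^sub>v x (Suc j) = A ^\<^sub>m k *\<^sub>v (A *\<^sub>v x j) + A ^\<^sub>m k *\<^sub>v (B *\<^sub>v u j)"
    using dyn Suc.prems A B xj uj by (simp add: mult_add_distrib_mat_vec[of _ n n])
  also have "\<dots> = A ^\<^sub>m Suc k *\<^sub>v x j + (A ^\<^sub>m k * B) *\<^sub>v u j"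
    using A B xj uj by (simp add: assoc_mult_mat_vec[of _ n n _ n] assoc_mult_mat_vec[of _ n n _ m])
  finally have "A ^\<^sub>m k *\<^sub>v x (Suc j) = A ^\<^sub>m Suc k *\<^sub>v x j + (A ^\<^sub>m k * B) *\<^sub>v u j" .
  moreover have "\<xi> \<bullet> (A ^\<^sub>m Suc k *\<^sub>v x j + (A ^\<^sub>m k * B) *\<^sub>v u j)
      = \<xi> \<bullet> (A ^\<^sub>m Suc k *\<^sub>v x j) + \<xi> \<bullet> ((A ^\<^sub>m k * B) *\<^sub>v u j)"
    using A B xj uj by (intro scalar_prod_add_distrib[OF \<xi>] mult_mat_vec_carrier) auto
  ultimately have "\<xi> \<bullet> (A ^\<^sub>m k *\<^sub>v x (Suc j))
      = \<xi> \<bullet> (A ^\<^sub>m Suc k *\<^sub>v x j) + \<xi> \<bullet> ((A ^\<^sub>m k * B) *\<^sub>v u j)"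
    by simp
  then show ?case
    using Suc.IH[of "Suc j"] Suc.prems unfolding sum.lessThan_Suc_shift by (simp add: add.assoc)
qed

lemma exists_monic_dependency:
  assumes z: "\<forall>k\<le>n. z k \<in> carrier_vec n"
  shows "\<exists>a d. d \<le> n \<and> a d = (1 :: real) \<and> (\<forall>v\<in>carrier_vec n. (\<Sum>k\<le>d. a k * (z k \<bullet> v)) = 0)"
proof -
  have "vec_space.rank (Suc n) (mat (Suc n) n (\<lambda>(k, i). z k $ i)) \<le> n"
    by (rule vec_space.rank_le_nc) auto
  then have "\<not> full_row_rank (mat (Suc n) n (\<lambda>(k, i). z k $ i))"
    unfolding full_row_rank_def by simp
  then obtain c where c: "c \<in> carrier_vec (Suc n)" "c \<noteq> 0\<^sub>v (Suc n)"
    and rel: "\<forall>i<n. (\<Sum>k<Suc n. c $ k * z k $ i) = 0"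
    unfolding full_row_rank_mat_iff by (auto simp del: sum.lessThan_Suc)
  obtain k where "k \<le> n" "c $ k \<noteq> 0" using c by (auto simp: vec_eq_iff less_Suc_eq_le)
  then obtain d where d: "d \<le> n" "c $ d \<noteq> 0" and d_max: "\<And>k. k \<le> n \<Longrightarrow> c $ k \<noteq> 0 \<Longrightarrow> k \<le> d"
    using Nat.ex_has_greatest_nat[of "\<lambda>k. k \<le> n \<and> c $ k \<noteq> 0" k n] by blast
  have c_zero: "c $ k = 0" if "d < k" "k \<le> n" for k
    using d_max that by fastforce
  have "(\<Sum>k\<le>d. c $ k * (z k \<bullet> v)) = 0" if v: "v \<in> carrier_vec n" for v
  proof -
    have "(\<Sum>k\<le>d. c $ k * (z k \<bullet> v)) = (\<Sum>k<Suc n. c $ k * (z k \<bullet> v))"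
      using d c_zero by (intro sum.mono_neutral_left) (auto simp: less_Suc_eq_le)
    also have "\<dots> = (\<Sum>k<Suc n. \<Sum>i<n. c $ k * z k $ i * v $ i)"
      using v z by (simp add: scalar_prod_def lessThan_atLeast0 sum_distrib_left mult.assoc del: sum.lessThan_Suc)
    also have "\<dots> = (\<Sum>i<n. \<Sum>k<Suc n. c $ k * z k $ i * v $ i)"
      by (rule sum.swap)
    also have "\<dots> = (\<Sum>i<n. (\<Sum>k<Suc n. c $ k * z k $ i) * v $ i)"
      by (simp only: sum_distrib_right)
    finally show ?thesis using rel by simp
  qed
  then have "\<forall>v\<in>carrier_vec n. (\<Sum>k\<le>d. c $ k / c $ d * (z k \<bullet> v)) = 0"
    by (simp add: sum_divide_distrib[symmetric])
  then show ?thesis using d by (intro exI[of _ "\<lambda>k. c $ k / c $ d"] exI[of _ d]) simp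
qed

lemma monic_recurrence_eq_0:
  fixes a h :: "nat \<Rightarrow> real"
  assumes monic: "a d = 1"
    and rec: "\<forall>s. (\<Sum>k\<le>d. a k * h (s + k)) = 0"
    and init: "\<forall>i<d. (\<Sum>k\<in>{Suc i..d}. a k * h (k - Suc i)) = 0"
  shows "h l = 0"
proof (induction l rule: less_induct)
  case (less l)
  show ?case
  proof (cases "l < d")
    case True
    have "0 = (\<Sum>k\<in>{Suc (d - Suc l)..d}. a k * h (k - Suc (d - Suc l)))"
      using init[rule_format, of "d - Suc l"] True by simp
    also have "\<dots> = (\<Sum>k\<in>{d - l..d}. if k = d then h l else 0)"
      using True monic less.IH by (intro sum.cong) (auto simp: Suc_diff_Suc)
    finally show ?thesis using True by simp
  next
    case False
    have "(\<Sum>k\<le>d. a k * h (l - d + k)) = (\<Sum>k\<le>d. if k = d then h l else 0)"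
      using False monic less.IH by (intro sum.cong) auto
    then show ?thesis using rec by simp
  qed
qed

lemma exists_monic_left_annihilator:
  fixes A :: "real mat"
  assumes A: "A \<in> carrier_mat n n" and \<xi>: "\<xi> \<in> carrier_vec n"
  obtains a d where "d \<le> n" and "a d = (1 :: real)"
    and "\<forall>v\<in>carrier_vec n. (\<Sum>k\<le>d. a k * (\<xi> \<bullet> (A ^\<^sub>m k *\<^sub>v v))) = 0"
proof -
  have z_carrier: "\<forall>k\<le>n. transpose_mat (A ^\<^sub>m k) *\<^sub>v \<xi> \<in> carrier_vec n"
    using A \<xi> by (auto intro!: mult_mat_vec_carrier[of _ n n])
  obtain a d where "d \<le> n" "a d = 1"
    and dep: "\<forall>v\<in>carrier_vec n. (\<Sum>k\<le>d. a k * ((transpose_mat (A ^\<^sub>m k) *\<^sub>v \<xi>) \<bullet> v)) = 0"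
    using exists_monic_dependency[OF z_carrier] by blast
  moreover have "(transpose_mat (A ^\<^sub>m k) *\<^sub>v \<xi>) \<bullet> v = \<xi> \<bullet> (A ^\<^sub>m k *\<^sub>v v)"
    if "v \<in> carrier_vec n" for k v
    using transpose_vec_mult_scalar[of "A ^\<^sub>m k" n n v \<xi>] A \<xi> that by simp
  ultimately show ?thesis using that by simp
qed

lemma transpose_mult_vec_scalar_prod:
  fixes A B :: "real mat"
  assumes "A \<in> carrier_mat n n" "B \<in> carrier_mat n m" "\<xi> \<in> carrier_vec n" "w \<in> carrier_vec m"
  shows "\<xi> \<bullet> ((A ^\<^sub>m l * B) *\<^sub>v w) = (transpose_mat (A ^\<^sub>m l * B) *\<^sub>v \<xi>) \<bullet> w"
  using transpose_vec_mult_scalar[OF mult_carrier_mat[OF pow_carrier_mat[OF assms(1)] assms(2)] assms(4,3)]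
  by simp

lemma annihilator_recurrence:
  fixes A :: "real mat"
  assumes A: "A \<in> carrier_mat n n" and B: "B \<in> carrier_mat n m" and \<xi>: "\<xi> \<in> carrier_vec n"
    and dep: "\<forall>v\<in>carrier_vec n. (\<Sum>k\<le>d. a k * (\<xi> \<bullet> (A ^\<^sub>m k *\<^sub>v v))) = 0"
    and p: "p < m"
  shows "(\<Sum>k\<le>d. a k * (transpose_mat (A ^\<^sub>m (s + k) * B) *\<^sub>v \<xi>) $ p) = 0"
proof -
  let ?e = "unit_vec m p" and ?v = "A ^\<^sub>m s *\<^sub>v (B *\<^sub>v unit_vec m p)"
  have e: "?e \<in> carrier_vec m" by simp
  have "(A ^\<^sub>m (s + k) * B) *\<^sub>v ?e = (A ^\<^sub>m k * A ^\<^sub>m s) *\<^sub>v (B *\<^sub>v ?e)" for k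
    using pow_mat_add[OF A, of k s]
      assoc_mult_mat_vec[OF mult_carrier_mat[OF pow_carrier_mat[OF A] pow_carrier_mat[OF A]] B e]
    by (simp add: add.commute)
  also have "\<dots> k = A ^\<^sub>m k *\<^sub>v ?v" for k
    using assoc_mult_mat_vec[OF pow_carrier_mat[OF A] pow_carrier_mat[OF A] mult_mat_vec_carrier[OF B e]] .
  finally have "(transpose_mat (A ^\<^sub>m (s + k) * B) *\<^sub>v \<xi>) $ p = \<xi> \<bullet> (A ^\<^sub>m k *\<^sub>v ?v)" for k
    using transpose_mult_vec_scalar_prod[OF A B \<xi> e, of "s + k"] A B p by simp
  moreover have "?v \<in> carrier_vec n"
    using mult_mat_vec_carrier[OF pow_carrier_mat[OF A] mult_mat_vec_carrier[OF B e]] .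
  ultimately show ?thesis using dep by simp
qed

lemma annihilator_input_relation:
  fixes A :: "real mat"
  assumes A: "A \<in> carrier_mat n n" and B: "B \<in> carrier_mat n m" and \<xi>: "\<xi> \<in> carrier_vec n"
    and x: "\<forall>t\<le>T. x t \<in> carrier_vec n" and u: "\<forall>t\<le>T. u t \<in> carrier_vec m"
    and dyn: "\<forall>t<T. x (Suc t) = A *\<^sub>v x t + B *\<^sub>v u t"
    and orth: "\<forall>t\<le>T. \<xi> \<bullet> x t = 0"
    and dep: "\<forall>v\<in>carrier_vec n. (\<Sum>k\<le>d. a k * (\<xi> \<bullet> (A ^\<^sub>m k *\<^sub>v v))) = 0"
    and "d \<le> n" and j: "j + n \<le> T"
  shows "(\<Sum>i<n. \<Sum>p<m. (\<Sum>k\<in>{Suc i..d}. a k * (transpose_mat (A ^\<^sub>m (k - Suc i) * B) *\<^sub>v \<xi>) $ p)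
      * u (j + i) $ p) = 0"
    (is "(\<Sum>i<n. \<Sum>p<m. ?W i p * _) = 0")
proof -
  define h where "h l = transpose_mat (A ^\<^sub>m l * B) *\<^sub>v \<xi>" for l
  have "0 = (\<Sum>k\<le>d. a k * (\<xi> \<bullet> x (j + k)))" using orth j \<open>d \<le> n\<close> by simp
  also have "\<dots> = (\<Sum>k\<le>d. a k * (\<xi> \<bullet> (A ^\<^sub>m k *\<^sub>v x j)))
      + (\<Sum>k\<le>d. \<Sum>i<k. a k * (h (k - Suc i) \<bullet> u (j + i)))"
    using trajectory_expansion[OF A B \<xi> x u dyn] transpose_mult_vec_scalar_prod[OF A B \<xi>] u j \<open>d \<le> n\<close>
    unfolding h_def by (simp add: distrib_left sum.distrib sum_distrib_left)
  also have "(\<Sum>k\<le>d. a k * (\<xi> \<bullet> (A ^\<^sub>m k *\<^sub>v x j))) = 0" using dep x j by simp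
  also have "(\<Sum>k\<le>d. \<Sum>i<k. a k * (h (k - Suc i) \<bullet> u (j + i))) = (\<Sum>i<d. \<Sum>p<m. ?W i p * u (j + i) $ p)"
    unfolding sum_triangle_swap
  proof (rule sum.cong[OF refl])
    fix i assume "i \<in> {..<d}"
    then have u_i: "u (j + i) \<in> carrier_vec m" using u j \<open>d \<le> n\<close> by simp
    have "(\<Sum>k\<in>{Suc i..d}. a k * (h (k - Suc i) \<bullet> u (j + i)))
        = (\<Sum>k\<in>{Suc i..d}. \<Sum>p<m. a k * h (k - Suc i) $ p * u (j + i) $ p)"
      using u_i by (simp add: scalar_prod_def lessThan_atLeast0 sum_distrib_left mult.assoc)
    also have "\<dots> = (\<Sum>p<m. \<Sum>k\<in>{Suc i..d}. a k * h (k - Suc i) $ p * u (j + i) $ p)"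
      by (rule sum.swap)
    finally show "(\<Sum>k\<in>{Suc i..d}. a k * (h (k - Suc i) \<bullet> u (j + i))) = (\<Sum>p<m. ?W i p * u (j + i) $ p)"
      unfolding h_def by (simp add: sum_distrib_right)
  qed
  also have "\<dots> = (\<Sum>i<n. \<Sum>p<m. ?W i p * u (j + i) $ p)"
    using \<open>d \<le> n\<close> by (intro sum.mono_neutral_left) auto
  finally show ?thesis by simp
qed

lemma full_row_rank_state_data_if_persistently_exciting:
  assumes A: "A \<in> carrier_mat n n" and B: "B \<in> carrier_mat n m"
    and ctrl: "controllable n m A B"
    and x: "\<forall>t\<le>T. x t \<in> carrier_vec n" and u: "\<forall>t\<le>T. u t \<in> carrier_vec m"
    and dyn: "\<forall>t<T. x (Suc t) = A *\<^sub>v x t + B *\<^sub>v u t"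
    and pe: "persistently_exciting m T u n"
  shows "full_row_rank (hankel n 1 (T + 1) x)"
  unfolding full_row_rank_state_data_iff[OF x]
proof (intro ballI impI)
  fix \<xi> :: "real vec" assume \<xi>: "\<xi> \<in> carrier_vec n" and orth: "\<forall>t\<le>T. \<xi> \<bullet> x t = 0"
  have "n \<le> T" using pe[unfolded persistently_exciting_iff] by (rule conjunct1)
  have pe_kernel: "\<forall>w. (\<forall>j\<le>T - n. (\<Sum>i<n. \<Sum>p<m. w i p * u (j + i) $ p) = 0)
      \<longrightarrow> (\<forall>i<n. \<forall>p<m. w i p = 0)"
    using pe[unfolded persistently_exciting_iff] by (rule conjunct2)
  obtain a d where d: "d \<le> n" "a d = 1"
    and dep: "\<forall>v\<in>carrier_vec n. (\<Sum>k\<le>d. a k * (\<xi> \<bullet> (A ^\<^sub>m k *\<^sub>v v))) = 0"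
    using exists_monic_left_annihilator[OF A \<xi>] by blast
  define h where "h l = transpose_mat (A ^\<^sub>m l * B) *\<^sub>v \<xi>" for l
  have "\<forall>j\<le>T - n. (\<Sum>i<n. \<Sum>p<m. (\<Sum>k\<in>{Suc i..d}. a k * h (k - Suc i) $ p) * u (j + i) $ p) = 0"
    using annihilator_input_relation[OF A B \<xi> x u dyn orth dep \<open>d \<le> n\<close>] \<open>n \<le> T\<close>
    unfolding h_def by simp
  then have "\<forall>i<n. \<forall>p<m. (\<Sum>k\<in>{Suc i..d}. a k * h (k - Suc i) $ p) = 0"
    by (rule pe_kernel[THEN spec, THEN mp])
  then have "h l $ p = 0" if "p < m" for l p
    using monic_recurrence_eq_0[of a d "\<lambda>l. h l $ p"] d that
      annihilator_recurrence[OF A B \<xi> dep that] unfolding h_def by simp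
  then have "\<forall>k<n. h k = 0\<^sub>v m"
    using B unfolding h_def by (auto simp: vec_eq_iff)
  then show "\<xi> = 0\<^sub>v n" using ctrl \<xi> controllable_iff[OF A B] unfolding h_def by blast
qed

section \<open>A controllable Jordan-block system with rank-deficient state data\<close>

text \<open>\<open>shift_diff c\<close> is the operator \<open>\<sigma> - c\<close> on real sequences, \<open>\<sigma>\<close> being the forward shift.\<close>

definition shift_diff :: "real \<Rightarrow> (nat \<Rightarrow> real) \<Rightarrow> nat \<Rightarrow> real" where
  "shift_diff c f t = f (Suc t) - c * f t"

lemma shift_diff_pow_Suc:
  "(shift_diff c ^^ Suc k) f t = (shift_diff c ^^ k) f (Suc t) - c * (shift_diff c ^^ k) f t"
  by (simp add: shift_diff_def)

lemma shift_diff_pow_lincomb: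
  assumes "finite S"
  shows "(shift_diff c ^^ k) (\<lambda>t. \<Sum>l\<in>S. a l * f l t) t = (\<Sum>l\<in>S. a l * (shift_diff c ^^ k) (f l) t)"
proof (induction k arbitrary: t)
  case (Suc k)
  then show ?case
    by (simp only: shift_diff_pow_Suc) (simp add: sum_subtractf sum_distrib_left algebra_simps)
qed simp

lemma shift_diff_add_sum:
  "shift_diff c (\<lambda>t. f t + (\<Sum>l\<in>S. g l t)) t = shift_diff c f t + (\<Sum>l\<in>S. shift_diff c (g l) t)"
  by (simp add: shift_diff_def sum_subtractf sum_distrib_left algebra_simps)

lemma shift_diff_pow_at_Suc:
  "(shift_diff c ^^ k) f (Suc t) = (shift_diff c ^^ Suc k) f t + c * (shift_diff c ^^ k) f t"
  by (simp add: shift_diff_def)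

lemma shift_diff_pow_eq_0:
  assumes "\<forall>s\<le>k. f (t + s) = 0"
  shows "(shift_diff c ^^ k) f t = 0"
  using assms
proof (induction k arbitrary: t)
  case (Suc k)
  then have "(shift_diff c ^^ k) f (Suc t) = 0" "(shift_diff c ^^ k) f t = 0"
    by (auto intro!: Suc.IH)
  then show ?case by (simp add: shift_diff_pow_at_Suc)
qed simp

lemma shift_eq_binomial_sum:
  "f (t + i) = (\<Sum>l\<le>i. of_nat (i choose l) * c ^ (i - l) * (shift_diff c ^^ l) f t)"
proof (induction i arbitrary: t)
  case (Suc i)
  define D where "D l = (shift_diff c ^^ l) f t" for l
  have "f (t + Suc i) = (\<Sum>l\<le>i. of_nat (i choose l) * c ^ (i - l) * (shift_diff c ^^ l) f (Suc t))"
    using Suc.IH[of "Suc t"] by simp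
  also have "\<dots> = (\<Sum>l\<le>i. of_nat (i choose l) * c ^ (i - l) * D (Suc l))
                 + (\<Sum>l\<le>i. of_nat (i choose l) * c ^ (Suc i - l) * D l)"
    unfolding D_def shift_diff_pow_at_Suc by (simp add: sum.distrib algebra_simps Suc_diff_le)
  also have "(\<Sum>l\<le>i. of_nat (i choose l) * c ^ (Suc i - l) * D l)
      = c ^ Suc i * D 0 + (\<Sum>l\<le>i. of_nat (i choose Suc l) * c ^ (i - l) * D (Suc l))"
  proof -
    have "(\<Sum>l\<le>i. of_nat (i choose l) * c ^ (Suc i - l) * D l)
        = (\<Sum>l\<le>Suc i. of_nat (i choose l) * c ^ (Suc i - l) * D l)"
      by simp
    also have "\<dots> = c ^ Suc i * D 0 + (\<Sum>l\<le>i. of_nat (i choose Suc l) * c ^ (i - l) * D (Suc l))"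
      by (subst sum.atMost_Suc_shift) simp
    finally show ?thesis .
  qed
  also have "(\<Sum>l\<le>i. of_nat (i choose l) * c ^ (i - l) * D (Suc l))
      + (c ^ Suc i * D 0 + (\<Sum>l\<le>i. of_nat (i choose Suc l) * c ^ (i - l) * D (Suc l)))
      = c ^ Suc i * D 0 + (\<Sum>l\<le>i. of_nat (Suc i choose Suc l) * c ^ (i - l) * D (Suc l))"
    by (simp add: sum.distrib algebra_simps)
  also have "\<dots> = (\<Sum>l\<le>Suc i. of_nat (Suc i choose l) * c ^ (Suc i - l) * D l)"
    by (simp only: sum.atMost_Suc_shift[of _ i]) simp
  finally show ?case unfolding D_def .
qed simp

lemma shift_diff_pow_vanishing:
  assumes init: "\<forall>j<n. (shift_diff c ^^ j) g 0 = 0"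
    and top: "\<forall>t. t + n \<le> T \<longrightarrow> (shift_diff c ^^ n) g t = 0"
    and "t \<le> T"
  shows "g t = 0"
proof -
  have "\<forall>t. t + k \<le> T \<longrightarrow> (shift_diff c ^^ k) g t = 0" if "k \<le> n" for k
    using that
  proof (induction k rule: inc_induct)
    case (step k)
    show ?case
    proof (intro allI impI)
      fix t assume "t + k \<le> T"
      then show "(shift_diff c ^^ k) g t = 0"
        using step.IH init step.hyps
        by (induction t) (simp_all add: shift_diff_pow_at_Suc)
    qed
  qed (use top in blast)
  from this[of 0] show ?thesis using \<open>t \<le> T\<close> by simp
qed

lemma exists_nonroot_if_coeff_nonzero:
  fixes e :: "nat \<Rightarrow> real"
  assumes "i0 < n" "e i0 \<noteq> 0"
  shows "\<exists>c. (\<Sum>i<n. c ^ i * e i) \<noteq> 0"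
proof -
  define P where "P = (\<Sum>i<n. monom (e i) i)"
  have "coeff P i0 = e i0" unfolding P_def coeff_sum using assms(1) by simp
  then have "P \<noteq> 0" using assms(2) by auto
  then obtain c where "poly P c \<noteq> 0" using poly_all_0_iff_0 by blast
  moreover have "poly P c = (\<Sum>i<n. c ^ i * e i)"
    unfolding P_def poly_sum poly_monom by (simp add: mult.commute)
  ultimately show ?thesis by auto
qed

lemma shifted_sum_eq_shift_diff_sum:
  "(\<Sum>i<n. e i * f (t + i))
    = (\<Sum>l<n. (\<Sum>i<n. of_nat (i choose l) * c ^ (i - l) * e i) * (shift_diff c ^^ l) f t)"
proof -
  have "f (t + i) = (\<Sum>l<n. of_nat (i choose l) * c ^ (i - l) * (shift_diff c ^^ l) f t)" if "i < n" for i
  proof -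
    have "(\<Sum>l\<le>i. of_nat (i choose l) * c ^ (i - l) * (shift_diff c ^^ l) f t)
        = (\<Sum>l<n. of_nat (i choose l) * c ^ (i - l) * (shift_diff c ^^ l) f t)"
      using that by (intro sum.mono_neutral_left) (auto simp: binomial_eq_0 not_le)
    then show ?thesis using shift_eq_binomial_sum[of f t i c] by simp
  qed
  then have "(\<Sum>i<n. e i * f (t + i))
      = (\<Sum>i<n. \<Sum>l<n. of_nat (i choose l) * c ^ (i - l) * e i * (shift_diff c ^^ l) f t)"
    by (simp add: sum_distrib_left ac_simps)
  also have "\<dots> = (\<Sum>l<n. \<Sum>i<n. of_nat (i choose l) * c ^ (i - l) * e i * (shift_diff c ^^ l) f t)"
    by (rule sum.swap)
  finally show ?thesis by (simp add: sum_distrib_right)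
qed

lemma jordan_block_mult_vec_index:
  fixes c :: real
  assumes v: "v \<in> carrier_vec n" and k: "k < n"
  shows "(jordan_block n c *\<^sub>v v) $ k = c * v $ k + (if Suc k < n then v $ Suc k else 0)"
proof -
  have "(jordan_block n c *\<^sub>v v) $ k = (\<Sum>i<n. jordan_block n c $$ (k, i) * v $ i)"
    using v k by (simp add: scalar_prod_def lessThan_atLeast0)
  also have "\<dots> = (\<Sum>i<n. (if i = k then c * v $ i else 0) + (if i = Suc k then v $ i else 0))"
    using k by (intro sum.cong) auto
  also have "\<dots> = c * v $ k + (if Suc k < n then v $ Suc k else 0)"
    using k by (simp add: sum.distrib)
  finally show ?thesis .
qed

lemma transpose_jordan_block_mult_vec_index:
  fixes c :: real
  assumes v: "v \<in> carrier_vec n" and j: "j < n"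
  shows "(transpose_mat (jordan_block n c) *\<^sub>v v) $ j = c * v $ j + (if j = 0 then 0 else v $ (j - 1))"
proof -
  have "(transpose_mat (jordan_block n c) *\<^sub>v v) $ j = (\<Sum>i<n. jordan_block n c $$ (i, j) * v $ i)"
    using v j by (simp add: scalar_prod_def lessThan_atLeast0)
  also have "\<dots> = (\<Sum>i<n. (if i = j then c * v $ i else 0) + (if j \<noteq> 0 \<and> i = j - 1 then v $ i else 0))"
    using j by (intro sum.cong) auto
  also have "\<dots> = c * v $ j + (if j = 0 then 0 else v $ (j - 1))"
    using j by (simp add: sum.distrib)
  finally show ?thesis .
qed

lemma shift_diff_pow_jordan_block_trajectory:
  fixes c :: real and B :: "real mat"
  assumes B: "B \<in> carrier_mat n m" and x: "\<forall>t. x t \<in> carrier_vec n"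
    and dyn: "\<forall>t. x (Suc t) = jordan_block n c *\<^sub>v x t + B *\<^sub>v u t"
  defines "X \<equiv> \<lambda>k t. if k < n then x t $ k else 0"
  shows "j \<le> n \<Longrightarrow>
    (shift_diff c ^^ j) (X 0) t = X j t + (\<Sum>l<j. (shift_diff c ^^ (j - Suc l)) (\<lambda>t. (B *\<^sub>v u t) $ l) t)"
proof (induction j arbitrary: t)
  case (Suc j)
  define \<sigma> where "\<sigma> l = (\<lambda>t. (B *\<^sub>v u t) $ l)" for l
  have X_step: "shift_diff c (X j) t = X (Suc j) t + \<sigma> j t"
  proof -
    have "x (Suc t) $ j = c * x t $ j + (if Suc j < n then x t $ Suc j else 0) + \<sigma> j t"
      using jordan_block_mult_vec_index[of "x t" n j c] x dyn B Suc.prems unfolding \<sigma>_def by simp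
    then show ?thesis unfolding shift_diff_def X_def using Suc.prems by simp
  qed
  have "(shift_diff c ^^ j) (X 0) = (\<lambda>t. X j t + (\<Sum>l<j. (shift_diff c ^^ (j - Suc l)) (\<sigma> l) t))"
    using Suc unfolding \<sigma>_def by fastforce
  then have "(shift_diff c ^^ Suc j) (X 0) t
      = shift_diff c (X j) t + (\<Sum>l<j. shift_diff c ((shift_diff c ^^ (j - Suc l)) (\<sigma> l)) t)"
    by (simp add: shift_diff_add_sum)
  also have "(\<Sum>l<j. shift_diff c ((shift_diff c ^^ (j - Suc l)) (\<sigma> l)) t)
      = (\<Sum>l<j. (shift_diff c ^^ (Suc j - Suc l)) (\<sigma> l) t)"
  proof (rule sum.cong[OF refl])
    fix l assume "l \<in> {..<j}"
    then have "Suc j - Suc l = Suc (j - Suc l)" by simp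
    then show "shift_diff c ((shift_diff c ^^ (j - Suc l)) (\<sigma> l)) t
        = (shift_diff c ^^ (Suc j - Suc l)) (\<sigma> l) t" by simp
  qed
  finally show ?case using X_step unfolding \<sigma>_def by simp
qed simp

lemma jordan_block_trajectory:
  fixes B :: "real mat" and u :: "nat \<Rightarrow> real vec"
  assumes n: "n \<ge> 1" and B: "B \<in> carrier_mat n m"
    and rel: "\<forall>t. t + n \<le> T \<longrightarrow> (\<Sum>l<n. (shift_diff c ^^ (n - Suc l)) (\<lambda>t. (B *\<^sub>v u t) $ l) t) = 0"
  obtains x where "\<forall>t. x t \<in> carrier_vec n"
    and "\<forall>t. x (Suc t) = jordan_block n c *\<^sub>v x t + B *\<^sub>v u t"
    and "\<forall>t\<le>T. x t $ 0 = 0"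
proof -
  \<comment> \<open>chosen such that \<open>(\<sigma> - c)\<^sup>j\<close> of the first coordinate vanishes at \<open>0\<close> for \<open>j < n\<close>\<close>
  define x0 where "x0 = vec n (\<lambda>j. - (\<Sum>l<j. (shift_diff c ^^ (j - Suc l)) (\<lambda>t. (B *\<^sub>v u t) $ l) 0))"
  define x where "x = rec_nat x0 (\<lambda>t xt. jordan_block n c *\<^sub>v xt + B *\<^sub>v u t)"
  have x_0: "x 0 = x0" and x_Suc: "\<forall>t. x (Suc t) = jordan_block n c *\<^sub>v x t + B *\<^sub>v u t"
    by (simp_all add: x_def)
  have x_carrier: "\<forall>t. x t \<in> carrier_vec n"
  proof
    fix t show "x t \<in> carrier_vec n"
    proof (cases t)
      case 0
      then show ?thesis by (simp add: x_0 x0_def)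
    next
      case (Suc t')
      have "dim_vec (x (Suc t')) = n" unfolding x_Suc[rule_format] using B by simp
      then show ?thesis unfolding Suc by (rule carrier_vecI)
    qed
  qed
  have "(\<lambda>t. if 0 < n then x t $ 0 else 0) = (\<lambda>t. x t $ 0)" using n by simp
  note coordinates = shift_diff_pow_jordan_block_trajectory[OF B x_carrier x_Suc, unfolded this]
  have "x t $ 0 = 0" if "t \<le> T" for t
  proof (rule shift_diff_pow_vanishing[of n c "\<lambda>t. x t $ 0" T, simplified])
    show "\<forall>j<n. (shift_diff c ^^ j) (\<lambda>t. x t $ 0) 0 = 0"
      using coordinates by (simp add: x_0 x0_def)
    show "\<forall>t. t + n \<le> T \<longrightarrow> (shift_diff c ^^ n) (\<lambda>t. x t $ 0) t = 0"
      using coordinates rel by simp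
  qed (rule that)
  then show ?thesis using that[of x] x_carrier x_Suc by simp
qed

lemma shift_diff_pow_jordan_block_row:
  fixes c :: real
  assumes \<xi>: "\<xi> \<in> carrier_vec n"
  defines "R \<equiv> \<lambda>j k. (transpose_mat (jordan_block n c ^\<^sub>m k) *\<^sub>v \<xi>) $ j"
  shows "j < n \<Longrightarrow> (shift_diff c ^^ l) (R j) k = (if l \<le> j then R (j - l) k else 0)"
proof (induction l arbitrary: j)
  case (Suc l)
  define J where "J = jordan_block n c"
  have J: "J \<in> carrier_mat n n" unfolding J_def by simp
  have R_diff: "shift_diff c (R j) = (if j = 0 then (\<lambda>k. 0) else R (j - 1))" if "j < n" for j
  proof
    fix k
    have r: "transpose_mat (J ^\<^sub>m k) *\<^sub>v \<xi> \<in> carrier_vec n"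
      using J \<xi> by (auto intro!: mult_mat_vec_carrier[of _ n n])
    have "transpose_mat (J ^\<^sub>m Suc k) *\<^sub>v \<xi> = transpose_mat J *\<^sub>v (transpose_mat (J ^\<^sub>m k) *\<^sub>v \<xi>)"
      using J \<xi> assoc_mult_mat_vec[of "transpose_mat J" n n "transpose_mat (J ^\<^sub>m k)" n \<xi>]
      by (simp add: transpose_mult[of "J ^\<^sub>m k" n n J n])
    then have "R j (Suc k) = c * R j k + (if j = 0 then 0 else R (j - 1) k)"
      using transpose_jordan_block_mult_vec_index[OF r that, of c] unfolding R_def J_def by simp
    then show "shift_diff c (R j) k = (if j = 0 then (\<lambda>k. 0) else R (j - 1)) k"
      unfolding shift_diff_def by simp
  qed
  show ?case
    using R_diff[OF Suc.prems] Suc.IH shift_diff_pow_eq_0[of l "\<lambda>k. 0" k c] Suc.prems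
    by (cases j) (simp_all add: funpow_Suc_right del: funpow.simps)
qed simp

lemma triangular_convolution_eq_0:
  fixes b :: "nat \<Rightarrow> real" and \<xi> :: "real vec"
  assumes corner: "b (n - 1) \<noteq> 0"
    and sums: "\<forall>l<n. (\<Sum>j<n. b j * (if l \<le> j then \<xi> $ (j - l) else 0)) = 0"
  shows "i < n \<Longrightarrow> \<xi> $ i = 0"
proof (induction i rule: less_induct)
  case (less i)
  have "(\<Sum>j<n. b j * (if n - Suc i \<le> j then \<xi> $ (j - (n - Suc i)) else 0))
      = (\<Sum>j<n. if j = n - 1 then b (n - 1) * \<xi> $ i else 0)"
    using less by (intro sum.cong) auto
  then show ?case using sums[rule_format, of "n - Suc i"] less.prems corner by simp
qed

lemma controllable_jordan_block:
  fixes B :: "real mat"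
  assumes B: "B \<in> carrier_mat n m" and p0: "p0 < m" and corner: "B $$ (n - 1, p0) \<noteq> 0"
  shows "controllable n m (jordan_block n c) B"
  unfolding controllable_iff[OF jordan_block_carrier B]
proof (intro ballI impI)
  fix \<xi> :: "real vec"
  assume \<xi>: "\<xi> \<in> carrier_vec n"
    and ker: "\<forall>k<n. transpose_mat (jordan_block n c ^\<^sub>m k * B) *\<^sub>v \<xi> = 0\<^sub>v m"
  define J where "J = jordan_block n c"
  have J: "J \<in> carrier_mat n n" unfolding J_def by simp
  define R where "R j k = (transpose_mat (J ^\<^sub>m k) *\<^sub>v \<xi>) $ j" for j k
  have column: "(transpose_mat (J ^\<^sub>m k * B) *\<^sub>v \<xi>) $ p0 = (\<Sum>j<n. B $$ (j, p0) * R j k)" for k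
  proof -
    have r: "transpose_mat (J ^\<^sub>m k) *\<^sub>v \<xi> \<in> carrier_vec n"
      using J \<xi> by (auto intro!: mult_mat_vec_carrier[of _ n n])
    have factor: "transpose_mat (J ^\<^sub>m k * B) *\<^sub>v \<xi> = transpose_mat B *\<^sub>v (transpose_mat (J ^\<^sub>m k) *\<^sub>v \<xi>)"
      using J B \<xi> assoc_mult_mat_vec[of "transpose_mat B" m n "transpose_mat (J ^\<^sub>m k)" n \<xi>]
      by (simp add: transpose_mult[of "J ^\<^sub>m k" n n B m])
    have "(transpose_mat B *\<^sub>v v) $ p0 = (\<Sum>j<n. B $$ (j, p0) * v $ j)"
      if "v \<in> carrier_vec n" for v
      using that B p0 by (simp add: scalar_prod_def lessThan_atLeast0)
    from this[OF r] show ?thesis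
      unfolding R_def factor .
  qed
  have "\<forall>l<n. (\<Sum>j<n. B $$ (j, p0) * (if l \<le> j then \<xi> $ (j - l) else 0)) = 0"
  proof (intro allI impI)
    fix l assume "l < n"
    have "(\<Sum>j<n. B $$ (j, p0) * R j s) = 0" if "s \<le> l" for s
      using column[of s] ker \<open>l < n\<close> that p0 unfolding J_def by simp
    then have "(shift_diff c ^^ l) (\<lambda>k. \<Sum>j<n. B $$ (j, p0) * R j k) 0 = 0"
      by (intro shift_diff_pow_eq_0) simp
    moreover have "(shift_diff c ^^ l) (\<lambda>k. \<Sum>j<n. B $$ (j, p0) * R j k) 0
        = (\<Sum>j<n. B $$ (j, p0) * (if l \<le> j then \<xi> $ (j - l) else 0))"
      unfolding shift_diff_pow_lincomb[OF finite_lessThan]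
      using shift_diff_pow_jordan_block_row[OF \<xi>] \<xi> unfolding R_def J_def
      by (intro sum.cong refl) simp
    ultimately show "(\<Sum>j<n. B $$ (j, p0) * (if l \<le> j then \<xi> $ (j - l) else 0)) = 0" by simp
  qed
  then have "\<xi> $ i = 0" if "i < n" for i
    using triangular_convolution_eq_0[of "\<lambda>j. B $$ (j, p0)"] corner that by simp
  then show "\<xi> = 0\<^sub>v n" using \<xi> by (intro eq_vecI) auto
qed

lemma input_relation_in_jordan_coordinates:
  fixes u :: "nat \<Rightarrow> real vec" and w :: "nat \<Rightarrow> nat \<Rightarrow> real"
  assumes u: "\<forall>t. u t \<in> carrier_vec m"
    and rel: "\<forall>j\<le>T - n. (\<Sum>i<n. \<Sum>p<m. w i p * u (j + i) $ p) = 0"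
    and i0: "i0 < n" and p0: "p0 < m" and nonzero: "w i0 p0 \<noteq> 0"
  obtains c B where "B \<in> carrier_mat n m" and "B $$ (n - 1, p0) \<noteq> 0"
    and "\<forall>t. t + n \<le> T \<longrightarrow> (\<Sum>l<n. (shift_diff c ^^ (n - Suc l)) (\<lambda>t. (B *\<^sub>v u t) $ l) t) = 0"
proof -
  obtain c where c: "(\<Sum>i<n. c ^ i * w i p0) \<noteq> 0"
    using exists_nonroot_if_coeff_nonzero[of i0 n "\<lambda>i. w i p0"] i0 nonzero by blast
  define b where "b l p = (\<Sum>i<n. of_nat (i choose l) * c ^ (i - l) * w i p)" for l p
  \<comment> \<open>row \<open>n - 1 - l\<close> holds the coefficients of \<open>(\<sigma> - c)\<^sup>l\<close>; the choice of \<open>c\<close> makes the last row nonzero\<close>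
  define B where "B = mat n m (\<lambda>(l, p). b (n - Suc l) p)"
  have B: "B \<in> carrier_mat n m" unfolding B_def by simp
  have u_dim: "dim_vec (u t) = m" for t using u by auto
  have "B $$ (n - 1, p0) = (\<Sum>i<n. c ^ i * w i p0)"
    using i0 p0 unfolding B_def b_def by simp
  then have corner: "B $$ (n - 1, p0) \<noteq> 0" using c by simp
  have "(\<Sum>l<n. (shift_diff c ^^ (n - Suc l)) (\<lambda>t. (B *\<^sub>v u t) $ l) t)
      = (\<Sum>i<n. \<Sum>p<m. w i p * u (t + i) $ p)" for t
  proof -
    have "(\<lambda>t. (B *\<^sub>v u t) $ l) = (\<lambda>t. \<Sum>p<m. b (n - Suc l) p * u t $ p)" if "l < n" for l
      using that unfolding B_def by (simp add: scalar_prod_def lessThan_atLeast0 fun_eq_iff u_dim)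
    then have "(\<Sum>l<n. (shift_diff c ^^ (n - Suc l)) (\<lambda>t. (B *\<^sub>v u t) $ l) t)
        = (\<Sum>l<n. \<Sum>p<m. b (n - Suc l) p * (shift_diff c ^^ (n - Suc l)) (\<lambda>t. u t $ p) t)"
      by (simp add: shift_diff_pow_lincomb)
    also have "\<dots> = (\<Sum>l<n. \<Sum>p<m. b l p * (shift_diff c ^^ l) (\<lambda>t. u t $ p) t)"
      by (rule sum.nat_diff_reindex)
    also have "\<dots> = (\<Sum>p<m. \<Sum>l<n. b l p * (shift_diff c ^^ l) (\<lambda>t. u t $ p) t)"
      by (rule sum.swap)
    also have "\<dots> = (\<Sum>p<m. \<Sum>i<n. w i p * u (t + i) $ p)"
    proof (rule sum.cong[OF refl])
      fix p
      show "(\<Sum>l<n. b l p * (shift_diff c ^^ l) (\<lambda>t. u t $ p) t) = (\<Sum>i<n. w i p * u (t + i) $ p)"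
        unfolding b_def
        using shifted_sum_eq_shift_diff_sum[where e = "\<lambda>i. w i p" and f = "\<lambda>t. u t $ p" and c = c]
        by simp
    qed
    also have "\<dots> = (\<Sum>i<n. \<Sum>p<m. w i p * u (t + i) $ p)"
      by (rule sum.swap)
    finally show ?thesis .
  qed
  then have "\<forall>t. t + n \<le> T \<longrightarrow> (\<Sum>l<n. (shift_diff c ^^ (n - Suc l)) (\<lambda>t. (B *\<^sub>v u t) $ l) t) = 0"
    using rel add_le_imp_le_diff by simp
  then show ?thesis by (rule that[OF B corner])
qed

lemma exists_jordan_input_relation:
  fixes u :: "nat \<Rightarrow> real vec"
  assumes m: "m \<ge> 1" and n: "n \<ge> 1" and u: "\<forall>t. u t \<in> carrier_vec m"
    and not_pe: "\<not> persistently_exciting m T u n"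
  obtains c B p0 where "B \<in> carrier_mat n m" and "p0 < m" and "B $$ (n - 1, p0) \<noteq> 0"
    and "\<forall>t. t + n \<le> T \<longrightarrow> (\<Sum>l<n. (shift_diff c ^^ (n - Suc l)) (\<lambda>t. (B *\<^sub>v u t) $ l) t) = 0"
proof (cases "n \<le> T")
  case True
  then have "\<not> (\<forall>w. (\<forall>j\<le>T - n. (\<Sum>i<n. \<Sum>p<m. w i p * u (j + i) $ p) = 0)
      \<longrightarrow> (\<forall>i<n. \<forall>p<m. w i p = 0))"
    using not_pe unfolding persistently_exciting_iff by simp
  then obtain w i0 p0 where rel: "\<forall>j\<le>T - n. (\<Sum>i<n. \<Sum>p<m. w i p * u (j + i) $ p) = 0"
    and i0: "i0 < n" and p0: "p0 < m" and nonzero: "w i0 p0 \<noteq> 0"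
    by blast
  obtain c B where "B \<in> carrier_mat n m" "B $$ (n - 1, p0) \<noteq> 0"
    "\<forall>t. t + n \<le> T \<longrightarrow> (\<Sum>l<n. (shift_diff c ^^ (n - Suc l)) (\<lambda>t. (B *\<^sub>v u t) $ l) t) = 0"
    using input_relation_in_jordan_coordinates[OF u rel i0 p0 nonzero] by blast
  then show ?thesis using that p0 by blast
next
  case False
  let ?B = "mat n m (\<lambda>(l, p). if l = n - 1 \<and> p = 0 then 1 else (0 :: real))"
  have "?B \<in> carrier_mat n m" "?B $$ (n - 1, 0) \<noteq> 0" using m n by auto
  moreover have "\<forall>t. t + n \<le> T \<longrightarrow> (\<Sum>l<n. (shift_diff 0 ^^ (n - Suc l)) (\<lambda>t. (?B *\<^sub>v u t) $ l) t) = 0"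
    using False by simp
  ultimately show ?thesis using that[of ?B 0 0] m by simp
qed

lemma controllable_system_with_rank_deficient_state_data:
  fixes u :: "nat \<Rightarrow> real vec"
  assumes m: "m \<ge> 1" and u: "\<forall>t\<le>T. u t \<in> carrier_vec m"
    and not_pe: "\<not> persistently_exciting m T u n"
  obtains A B x where "A \<in> carrier_mat n n" and "B \<in> carrier_mat n m" and "controllable n m A B"
    and "\<forall>t\<le>T. x t \<in> carrier_vec n" and "\<forall>t<T. x (Suc t) = A *\<^sub>v x t + B *\<^sub>v u t"
    and "\<not> full_row_rank (hankel n 1 (T + 1) x)"
proof -
  have n: "n \<ge> 1"
  proof (rule ccontr)
    assume "\<not> n \<ge> 1"
    then have "persistently_exciting m T u n" unfolding persistently_exciting_iff by simp
    with not_pe show False by contradiction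
  qed
  \<comment> \<open>inputs after time \<open>T\<close> do not matter; make all of them vectors of dimension \<open>m\<close>\<close>
  define u' where "u' t = (if t \<le> T then u t else 0\<^sub>v m)" for t
  have u': "\<forall>t. u' t \<in> carrier_vec m" using u unfolding u'_def by simp
  have not_pe': "\<not> persistently_exciting m T u' n"
    using not_pe persistently_exciting_cong[of T u u'] unfolding u'_def by simp
  obtain c B p0 where B: "B \<in> carrier_mat n m" and p0: "p0 < m" and corner: "B $$ (n - 1, p0) \<noteq> 0"
    and rel: "\<forall>t. t + n \<le> T \<longrightarrow> (\<Sum>l<n. (shift_diff c ^^ (n - Suc l)) (\<lambda>t. (B *\<^sub>v u' t) $ l) t) = 0"
    by (rule exists_jordan_input_relation[OF m n u' not_pe'])
  obtain x where x: "\<forall>t. x t \<in> carrier_vec n"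
    and dyn: "\<forall>t. x (Suc t) = jordan_block n c *\<^sub>v x t + B *\<^sub>v u' t"
    and x0: "\<forall>t\<le>T. x t $ 0 = 0"
    using jordan_block_trajectory[OF n B rel] .
  have "unit_vec n 0 \<bullet> x t = 0" if "t \<le> T" for t
    using x x0 n that by simp
  moreover have "unit_vec n 0 \<noteq> 0\<^sub>v n" using n by (simp add: vec_eq_iff)
  ultimately have "\<not> full_row_rank (hankel n 1 (T + 1) x)"
    using x full_row_rank_state_data_iff[of T x n] unit_vec_carrier[of n 0] by blast
  moreover have "\<forall>t<T. x (Suc t) = jordan_block n c *\<^sub>v x t + B *\<^sub>v u t"
    using dyn unfolding u'_def by simp
  moreover have "\<forall>t\<le>T. x t \<in> carrier_vec n" using x by simp
  ultimately show ?thesis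
    using that[OF jordan_block_carrier B controllable_jordan_block[OF B p0 corner]] by blast
qed

theorem corollary1:
  fixes n m T :: nat and u :: "nat \<Rightarrow> real vec"
  assumes m_pos: "m \<ge> 1"
    and u_dim: "\<forall>t \<le> T. u t \<in> carrier_vec m"
  shows "(\<forall>A B x. A \<in> carrier_mat n n \<longrightarrow> B \<in> carrier_mat n m \<longrightarrow> controllable n m A B \<longrightarrow>
            (\<forall>t \<le> T. x t \<in> carrier_vec n) \<longrightarrow>
            (\<forall>t < T. x (Suc t) = A *\<^sub>v x t + B *\<^sub>v u t) \<longrightarrow>
            full_row_rank (hankel n 1 (T + 1) x))
         \<longleftrightarrow> persistently_exciting m T u n"
proof
  assume data: "\<forall>A B x. A \<in> carrier_mat n n \<longrightarrow> B \<in> carrier_mat n m \<longrightarrow> controllable n m A B \<longrightarrow>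
            (\<forall>t \<le> T. x t \<in> carrier_vec n) \<longrightarrow>
            (\<forall>t < T. x (Suc t) = A *\<^sub>v x t + B *\<^sub>v u t) \<longrightarrow>
            full_row_rank (hankel n 1 (T + 1) x)"
  show "persistently_exciting m T u n"
  proof (rule ccontr)
    assume "\<not> persistently_exciting m T u n"
    then obtain A B x where A: "A \<in> carrier_mat n n" and B: "B \<in> carrier_mat n m"
      and ctrl: "controllable n m A B" and x: "\<forall>t\<le>T. x t \<in> carrier_vec n"
      and dyn: "\<forall>t<T. x (Suc t) = A *\<^sub>v x t + B *\<^sub>v u t"
      and deficient: "\<not> full_row_rank (hankel n 1 (T + 1) x)"
      by (rule controllable_system_with_rank_deficient_state_data[OF m_pos u_dim])
    have "full_row_rank (hankel n 1 (T + 1) x)"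
      using data A B ctrl x dyn by blast
    with deficient show False by contradiction
  qed
next
  assume pe: "persistently_exciting m T u n"
  show "\<forall>A B x. A \<in> carrier_mat n n \<longrightarrow> B \<in> carrier_mat n m \<longrightarrow> controllable n m A B \<longrightarrow>
            (\<forall>t \<le> T. x t \<in> carrier_vec n) \<longrightarrow>
            (\<forall>t < T. x (Suc t) = A *\<^sub>v x t + B *\<^sub>v u t) \<longrightarrow>
            full_row_rank (hankel n 1 (T + 1) x)"
    using full_row_rank_state_data_if_persistently_exciting[OF _ _ _ _ u_dim _ pe] by blast
qed

end
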